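(* Let $X$ be a finitely supported subset of an invariant set $Z$. (1) If $X$ is FSM Dedekind infinite, then $X$ is FSM Mostowski infinite. (2) If $X$ is FSM Mostowski infinite, then $X$ is FSM Tarski II infinite. The converse of (2) fails: $\wp_{fin}(A)$ is FSM Tarski II infinite but not FSM Mostowski infinite.
   Context: Framework (FSM). Work in ZF with a fixed infinite set $A$ of atoms; $S_A$ is the group of bijections of $A$ fixing all but finitely many atoms; $Fix(S)$ is the set of $\pi\in S_A$ fixing each element of $S\subseteq A$; $S$ supports $x$ if $\pi\cdot x=x$ for all $\pi\in Fix(S)$. An invariant set is an $S_A$-set all of whose elements have finite supports; subsets carry $\pi\star W=\{\pi\cdot w:w\in W\}$; relations on $Z$ are subsets of $Z\times Z$ with the componentwise action. $\wp_{fin}(A)$ is the set of finite subsets of $A$. A function is finitely supported if there is a finite $S$ such that for $\pi\in Fix(S)$, $\pi$ preserves domain and codomain and $f(\pi\cdot x)=\pi\cdot f(x)$. Definitions: $X$ is FSM Dedekind infinite if there is a finitely supported injection from $X$ onto a finitely supported proper subset of $X$. $X$ is FSM Mostowski infinite if there exist an infinite finitely supported subset $Y\subseteq X$ and a total order on $Y$ that is finitely supported as a subset of $Z\times Z$. $X$ is FSM Tarski II infinite if there is a nonempty finitely supported family of finitely supported subsets of $X$ that is totally ordered by inclusion and has no maximal element. *)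

theory Defs
  imports Main
begin

(* Atoms are the elements of a type 'a, assumed infinite in the theorem.
   S_A: bijections of the atoms fixing all but finitely many atoms. *)
definition perms :: "('a \<Rightarrow> 'a) set" where
  "perms = {p. bij p \<and> finite {a. p a \<noteq> a}}"

definition Fix :: "'a set \<Rightarrow> ('a \<Rightarrow> 'a) set" where
  "Fix S = {p \<in> perms. \<forall>a\<in>S. p a = a}"

definition supports :: "(('a \<Rightarrow> 'a) \<Rightarrow> 'z \<Rightarrow> 'z) \<Rightarrow> 'a set \<Rightarrow> 'z \<Rightarrow> bool" where
  "supports act S x \<longleftrightarrow> (\<forall>p\<in>Fix S. act p x = x)"

definition invariant_set :: "(('a \<Rightarrow> 'a) \<Rightarrow> 'z \<Rightarrow> 'z) \<Rightarrow> 'z set \<Rightarrow> bool" where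
  "invariant_set act Z \<longleftrightarrow>
     (\<forall>p\<in>perms. \<forall>z\<in>Z. act p z \<in> Z) \<and>
     (\<forall>z\<in>Z. act id z = z) \<and>
     (\<forall>p\<in>perms. \<forall>q\<in>perms. \<forall>z\<in>Z. act (p \<circ> q) z = act p (act q z)) \<and>
     (\<forall>z\<in>Z. \<exists>S. finite S \<and> supports act S z)"

definition fs_set :: "(('a \<Rightarrow> 'a) \<Rightarrow> 'z \<Rightarrow> 'z) \<Rightarrow> 'z set \<Rightarrow> bool" where
  "fs_set act X \<longleftrightarrow> (\<exists>S. finite S \<and> (\<forall>p\<in>Fix S. act p ` X = X))"

definition fs_rel :: "(('a \<Rightarrow> 'a) \<Rightarrow> 'z \<Rightarrow> 'z) \<Rightarrow> ('z \<times> 'z) set \<Rightarrow> bool" where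
  "fs_rel act R \<longleftrightarrow>
     (\<exists>S. finite S \<and> (\<forall>p\<in>Fix S. (\<lambda>(x, y). (act p x, act p y)) ` R = R))"

definition fs_family :: "(('a \<Rightarrow> 'a) \<Rightarrow> 'z \<Rightarrow> 'z) \<Rightarrow> 'z set set \<Rightarrow> bool" where
  "fs_family act F \<longleftrightarrow> (\<exists>S. finite S \<and> (\<forall>p\<in>Fix S. (\<lambda>W. act p ` W) ` F = F))"

definition fs_fun :: "(('a \<Rightarrow> 'a) \<Rightarrow> 'z \<Rightarrow> 'z) \<Rightarrow> 'z set \<Rightarrow> 'z set \<Rightarrow> ('z \<Rightarrow> 'z) \<Rightarrow> bool" where
  "fs_fun act X Y f \<longleftrightarrow>
     (\<exists>S. finite S \<and> (\<forall>p\<in>Fix S. act p ` X = X \<and> act p ` Y = Y \<and>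
                          (\<forall>x\<in>X. f (act p x) = act p (f x))))"

definition FSM_Dedekind_infinite :: "(('a \<Rightarrow> 'a) \<Rightarrow> 'z \<Rightarrow> 'z) \<Rightarrow> 'z set \<Rightarrow> bool" where
  "FSM_Dedekind_infinite act X \<longleftrightarrow>
     (\<exists>f Y. fs_set act Y \<and> Y \<subset> X \<and> bij_betw f X Y \<and> fs_fun act X Y f)"

definition FSM_Mostowski_infinite :: "(('a \<Rightarrow> 'a) \<Rightarrow> 'z \<Rightarrow> 'z) \<Rightarrow> 'z set \<Rightarrow> bool" where
  "FSM_Mostowski_infinite act X \<longleftrightarrow>
     (\<exists>Y R. Y \<subseteq> X \<and> infinite Y \<and> fs_set act Y \<and> linear_order_on Y R \<and> fs_rel act R)"

definition FSM_TarskiII_infinite :: "(('a \<Rightarrow> 'a) \<Rightarrow> 'z \<Rightarrow> 'z) \<Rightarrow> 'z set \<Rightarrow> bool" where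
  "FSM_TarskiII_infinite act X \<longleftrightarrow>
     (\<exists>F. F \<noteq> {} \<and> fs_family act F \<and> (\<forall>W\<in>F. W \<subseteq> X \<and> fs_set act W) \<and>
          (\<forall>U\<in>F. \<forall>W\<in>F. U \<subseteq> W \<or> W \<subseteq> U) \<and>
          \<not> (\<exists>M\<in>F. \<forall>W\<in>F. M \<subseteq> W \<longrightarrow> W = M))"

end

theory Submission
  imports Defs "HOL-Combinatorics.Cycles"
begin

(* A finitely supported injection of X onto a proper subset yields the orbit of a point outside
   the image, an infinite sequence with common support, ordered by its index.
   A finitely supported linear order is fixed pointwise by every permutation fixing its support:
   such a permutation acts as an order automorphism of finite order, and an order automorphism
   moving a point y would push it strictly up (or down) along the orbit of y, which is periodic.
   So an infinite linearly ordered subset has a common finite support S, and its finite initial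
   segments form a Tarski II chain. In the finite powerset of the atoms, a finite set supported
   by S is contained in S, so there are only finitely many of them and no infinite subset can be
   linearly ordered; on the other hand the sets of finite sets of size at most n form a strictly
   increasing chain of equivariant families. *)

lemma perms_iff_permutation: "p \<in> perms \<longleftrightarrow> permutation p"
  by (simp add: perms_def permutation)

lemma image_eq_if_fixes_pointwise:
  assumes "\<And>x. x \<in> A \<Longrightarrow> f x = x"
  shows "f ` A = A"
  using image_cong[of A A f "\<lambda>x. x"] assms by simp

lemma funpow_monotone_rel:
  assumes "\<And>x y. (x, y) \<in> R \<Longrightarrow> (g x, g y) \<in> R" and "(x, y) \<in> R"
  shows "((g ^^ k) x, (g ^^ k) y) \<in> R"
  using assms by (induction k) auto

lemma monotone_periodic_point_fixed:
  assumes "trans R" and "antisym R"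
    and mono: "\<And>x y. (x, y) \<in> R \<Longrightarrow> (g x, g y) \<in> R"
    and period: "(g ^^ n) y = y" "n > 0"
    and up: "(y, g y) \<in> R"
  shows "g y = y"
proof -
  have chain: "(y, (g ^^ Suc k) y) \<in> R" for k
  proof (induction k)
    case 0
    then show ?case using up by simp
  next
    case (Suc k)
    have "((g ^^ Suc k) y, (g ^^ Suc k) (g y)) \<in> R"
      by (rule funpow_monotone_rel[OF mono up])
    then show ?case
      using Suc \<open>trans R\<close> by (metis funpow_Suc_right o_apply transD)
  qed
  (* apply g to y \<le> g^(2n-1) y; the exponent 2n - 1 is positive even for n = 1 *)
  obtain k where k: "Suc (Suc k) = 2 * n"
    using \<open>n > 0\<close> by (intro that[of "2 * n - 2"]) simp
  have "(g ^^ (2 * n)) y = y"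
    using period(1) by (simp add: mult_2 funpow_add)
  then have "(g y, y) \<in> R"
    using mono[OF chain[of k]] k by (metis funpow.simps(2) o_apply)
  with up \<open>antisym R\<close> show ?thesis by (metis antisymD)
qed

lemma act_funpow:
  assumes "invariant_set act Z" and "p \<in> perms" and "z \<in> Z"
  shows "act (p ^^ k) z = (act p ^^ k) z"
proof (induction k)
  case 0
  then show ?case using assms by (simp add: invariant_set_def id_def)
next
  case (Suc k)
  have "p ^^ k \<in> perms"
    using assms(2) by (simp add: perms_iff_permutation permutation_funpow)
  then have "act (p \<circ> p ^^ k) z = act p (act (p ^^ k) z)"
    using assms unfolding invariant_set_def by blast
  with Suc show ?case by (simp add: comp_def)
qed

lemma invariant_linear_order_fixes_elements:
  assumes inv: "invariant_set act Z" and "Y \<subseteq> Z"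
    and lin: "linear_order_on Y R" and p: "p \<in> perms"
    and R_fixed: "(\<lambda>(x, y). (act p x, act p y)) ` R = R"
    and y: "y \<in> Y"
  shows "act p y = y"
proof -
  define g where "g = act p"
  have mono: "(g x, g z) \<in> R" if "(x, z) \<in> R" for x z
    using that R_fixed unfolding g_def by force
  have "trans R" and "antisym R" and total: "total_on Y R"
    and "refl_on Y R" and "R \<subseteq> Y \<times> Y"
    using lin by (auto simp: linear_order_on_def partial_order_on_def preorder_on_def)
  then have "g y \<in> Y"
    using mono[of y y] y by (auto simp: refl_on_def)
  obtain n where "p ^^ n = id" and "n > 0"
    using p perms_iff_permutation permutation_is_nilpotent by blast
  moreover have "act id y = y"
    using inv y \<open>Y \<subseteq> Z\<close> unfolding invariant_set_def by blast
  ultimately have period: "(g ^^ n) y = y"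
    using act_funpow[OF inv p, of y n] y \<open>Y \<subseteq> Z\<close> by (auto simp: g_def)
  consider "g y = y" | "(y, g y) \<in> R" | "(y, g y) \<in> R\<inverse>"
    using total y \<open>g y \<in> Y\<close> by (auto simp: total_on_def)
  then have "g y = y"
  proof cases
    case 2
    then show ?thesis
      using monotone_periodic_point_fixed[OF \<open>trans R\<close> \<open>antisym R\<close> mono period \<open>n > 0\<close>]
      by blast
  next
    case 3
    have "trans (R\<inverse>)" and "antisym (R\<inverse>)"
      using \<open>trans R\<close> \<open>antisym R\<close> by (auto simp: trans_def antisym_def)
    moreover have "(g x, g z) \<in> R\<inverse>" if "(x, z) \<in> R\<inverse>" for x z
      using mono that by simp
    ultimately show ?thesis
      using monotone_periodic_point_fixed[of "R\<inverse>" g n y] period \<open>n > 0\<close> 3 by blast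
  qed
  then show ?thesis by (simp add: g_def)
qed

lemma fs_linear_order_common_support:
  assumes "invariant_set act Z" and "Y \<subseteq> Z"
    and "linear_order_on Y R" and "fs_rel act R"
  obtains S where "finite S" and "\<And>p y. p \<in> Fix S \<Longrightarrow> y \<in> Y \<Longrightarrow> act p y = y"
proof -
  obtain S where "finite S" and S: "\<forall>p\<in>Fix S. (\<lambda>(x, y). (act p x, act p y)) ` R = R"
    using \<open>fs_rel act R\<close> unfolding fs_rel_def by blast
  have "act p y = y" if "p \<in> Fix S" "y \<in> Y" for p y
    using invariant_linear_order_fixes_elements[OF assms(1-3)] S that
    unfolding Fix_def by blast
  with \<open>finite S\<close> show thesis by (rule that)
qed

lemma inj_funpow_orbit:
  assumes "inj_on f X" and "f ` X \<subseteq> X" and "x \<in> X" and "x \<notin> f ` X"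
  shows "inj (\<lambda>n. (f ^^ n) x)"
proof -
  have orbit: "(f ^^ n) x \<in> X" for n
    by (induction n) (use assms in auto)
  have shift: "(f ^^ Suc (i + k)) x \<noteq> (f ^^ i) x" for i k
  proof (induction i)
    case 0
    show ?case
      unfolding add_0 funpow.simps(2) o_apply funpow_0
      using assms(4) orbit[of k] by (metis image_eqI)
  next
    case (Suc i)
    have "f ((f ^^ Suc (i + k)) x) \<noteq> f ((f ^^ i) x)"
      using Suc.IH inj_on_eq_iff[OF assms(1) orbit orbit] by blast
    then show ?case
      unfolding add_Suc funpow.simps(2) o_apply .
  qed
  show ?thesis
  proof (rule linorder_injI)
    fix i j :: nat assume "i < j"
    then obtain k where "j = Suc (i + k)" using less_imp_Suc_add by metis
    then show "(f ^^ i) x \<noteq> (f ^^ j) x" using shift[of i k] by metis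
  qed
qed

lemma Mostowski_infinite_if_fixed_injective_sequence:
  fixes s :: "nat \<Rightarrow> 'z"
  assumes "inj s" and "range s \<subseteq> X" and "finite S"
    and fixed: "\<And>p n. p \<in> Fix S \<Longrightarrow> act p (s n) = s n"
  shows "FSM_Mostowski_infinite act X"
proof -
  define R where "R = {(s i, s j) | i j. i \<le> j}"
  have "act p ` range s = range s" if "p \<in> Fix S" for p
    using fixed[OF that] by (intro image_eq_if_fixes_pointwise) blast
  then have "fs_set act (range s)"
    unfolding fs_set_def using \<open>finite S\<close> by blast
  have "(\<lambda>(x, y). (act p x, act p y)) ` R = R" if "p \<in> Fix S" for p
    unfolding R_def using fixed[OF that] by (intro image_eq_if_fixes_pointwise) auto
  then have "fs_rel act R"
    unfolding fs_rel_def using \<open>finite S\<close> by blast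
  moreover have "linear_order_on (range s) R"
    unfolding linear_order_on_def partial_order_on_def preorder_on_def refl_on_def
      trans_def antisym_def total_on_def R_def
    using \<open>inj s\<close> by (auto simp: inj_eq)
  moreover have "infinite (range s)"
    using \<open>inj s\<close> by (metis finite_imageD infinite_UNIV_nat)
  ultimately show ?thesis
    using \<open>range s \<subseteq> X\<close> \<open>fs_set act (range s)\<close> unfolding FSM_Mostowski_infinite_def by blast
qed

lemma TarskiII_infinite_if_strict_chain:
  fixes C :: "nat \<Rightarrow> 'z set"
  assumes "strict_mono C" and "\<And>n. C n \<subseteq> X" and "finite S"
    and fixed: "\<And>p n. p \<in> Fix S \<Longrightarrow> act p ` C n = C n"
  shows "FSM_TarskiII_infinite act X"
  unfolding FSM_TarskiII_infinite_def
proof (intro exI[of _ "range C"] conjI ballI)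
  have "(\<lambda>W. act p ` W) ` range C = range C" if "p \<in> Fix S" for p
    unfolding image_image fixed[OF that] ..
  with \<open>finite S\<close> show "fs_family act (range C)"
    unfolding fs_family_def by (intro exI[of _ S]) simp
  show "W \<subseteq> X" if "W \<in> range C" for W
    using that assms(2) by blast
  show "fs_set act W" if "W \<in> range C" for W
    using that \<open>finite S\<close> fixed unfolding fs_set_def by blast
  show "U \<subseteq> W \<or> W \<subseteq> U" if U: "U \<in> range C" and W: "W \<in> range C" for U W
  proof -
    obtain m n where "U = C m" and "W = C n" using U W by blast
    with strict_mono_mono[OF \<open>strict_mono C\<close>] show ?thesis
      by (metis le_cases monoD)
  qed
  show "\<not> (\<exists>M\<in>range C. \<forall>W\<in>range C. M \<subseteq> W \<longrightarrow> W = M)"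
  proof
    assume "\<exists>M\<in>range C. \<forall>W\<in>range C. M \<subseteq> W \<longrightarrow> W = M"
    then obtain n where maximal: "\<And>W. W \<in> range C \<Longrightarrow> C n \<subseteq> W \<Longrightarrow> W = C n"
      by blast
    have "C n \<subset> C (Suc n)"
      using \<open>strict_mono C\<close> by (simp add: strict_mono_Suc_iff)
    with maximal[of "C (Suc n)"] show False by blast
  qed
qed simp

lemma Dedekind_imp_Mostowski_infinite:
  assumes "invariant_set act Z" and "X \<subseteq> Z" and "FSM_Dedekind_infinite act X"
  shows "FSM_Mostowski_infinite act X"
proof -
  obtain f Y where "Y \<subset> X" and f: "bij_betw f X Y" and "fs_fun act X Y f"
    using assms(3) unfolding FSM_Dedekind_infinite_def by blast
  from \<open>fs_fun act X Y f\<close> obtain S where "finite S"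
    and S: "\<forall>p\<in>Fix S. act p ` X = X \<and> act p ` Y = Y \<and> (\<forall>x\<in>X. f (act p x) = act p (f x))"
    unfolding fs_fun_def by blast
  obtain x where x: "x \<in> X" "x \<notin> Y" using \<open>Y \<subset> X\<close> by blast
  obtain T where "finite T" and "supports act T x"
    using assms(1,2) x unfolding invariant_set_def by blast
  define s where "s n = (f ^^ n) x" for n
  have "f ` X = Y" using f by (simp add: bij_betw_def)
  with \<open>Y \<subset> X\<close> have "f ` X \<subseteq> X" by blast
  have orbit: "s n \<in> X" for n
    unfolding s_def by (induction n) (use x(1) \<open>f ` X \<subseteq> X\<close> in auto)
  have "inj s"
    unfolding s_def
    by (rule inj_funpow_orbit[OF bij_betw_imp_inj_on[OF f] \<open>f ` X \<subseteq> X\<close> x(1)])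
      (use x(2) \<open>f ` X = Y\<close> in blast)
  have "act p (s n) = s n" if "p \<in> Fix (S \<union> T)" for p n
  proof (induction n)
    case 0
    then show ?case
      using \<open>supports act T x\<close> that by (simp add: s_def supports_def Fix_def)
  next
    case (Suc n)
    have "p \<in> Fix S" using that by (simp add: Fix_def)
    have "act p (s (Suc n)) = act p (f (s n))" by (simp add: s_def)
    also have "\<dots> = f (act p (s n))" using S \<open>p \<in> Fix S\<close> orbit by simp
    also have "\<dots> = s (Suc n)" using Suc.IH by (simp add: s_def)
    finally show ?case .
  qed
  then show ?thesis
    using Mostowski_infinite_if_fixed_injective_sequence[OF \<open>inj s\<close> _ finite_UnI]
      orbit \<open>finite S\<close> \<open>finite T\<close> by blast
qed

lemma Mostowski_imp_TarskiII_infinite: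
  assumes "invariant_set act Z" and "X \<subseteq> Z" and "FSM_Mostowski_infinite act X"
  shows "FSM_TarskiII_infinite act X"
proof -
  obtain Y R where "Y \<subseteq> X" "infinite Y" "linear_order_on Y R" "fs_rel act R"
    using assms(3) unfolding FSM_Mostowski_infinite_def by blast
  obtain S where "finite S" and fixed: "\<And>p y. p \<in> Fix S \<Longrightarrow> y \<in> Y \<Longrightarrow> act p y = y"
    using fs_linear_order_common_support[OF assms(1) _ \<open>linear_order_on Y R\<close> \<open>fs_rel act R\<close>]
      \<open>Y \<subseteq> X\<close> \<open>X \<subseteq> Z\<close> by blast
  obtain s :: "nat \<Rightarrow> _" where "inj s" "range s \<subseteq> Y"
    using infinite_countable_subset \<open>infinite Y\<close> by blast
  show ?thesis
  proof (rule TarskiII_infinite_if_strict_chain)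
    have "s n \<notin> s ` {..<n}" for n
      using \<open>inj s\<close> by (auto simp: inj_eq)
    then show "strict_mono (\<lambda>n. s ` {..<n})"
      by (simp add: strict_mono_Suc_iff lessThan_Suc psubset_insert_iff)
    show "s ` {..<n} \<subseteq> X" for n
      using \<open>range s \<subseteq> Y\<close> \<open>Y \<subseteq> X\<close> by blast
    show "act p ` s ` {..<n} = s ` {..<n}" if "p \<in> Fix S" for p n
      using fixed[OF that] \<open>range s \<subseteq> Y\<close> by (intro image_eq_if_fixes_pointwise) blast
  qed fact
qed

lemma invariant_set_finite_sets: "invariant_set (\<lambda>p W. p ` W) {W :: 'a set. finite W}"
  unfolding invariant_set_def supports_def Fix_def by (auto simp: image_comp)

lemma bij_image_card_le_sets:
  assumes "bij p"
  shows "(\<lambda>V. p ` V) ` {W. finite W \<and> card W \<le> n} = {W. finite W \<and> card W \<le> n}"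
proof (intro equalityI subsetI)
  have card_image_p: "card (p ` V) = card V" for V
    using card_image[OF inj_on_subset[OF bij_is_inj[OF assms] subset_UNIV]] .
  fix V
  show "V \<in> {W. finite W \<and> card W \<le> n}" if "V \<in> (\<lambda>V. p ` V) ` {W. finite W \<and> card W \<le> n}"
    using that card_image_p by auto
  assume V: "V \<in> {W. finite W \<and> card W \<le> n}"
  have "V = p ` inv p ` V"
    using bij_is_surj[OF assms] by (simp add: image_comp surj_iff)
  moreover have "inv p ` V \<in> {W. finite W \<and> card W \<le> n}"
    using V card_image_p[of "inv p ` V"] \<open>V = p ` inv p ` V\<close> by simp
  ultimately show "V \<in> (\<lambda>V. p ` V) ` {W. finite W \<and> card W \<le> n}" by blast
qed

lemma TarskiII_infinite_finite_sets:
  assumes "infinite (UNIV :: 'a set)"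
  shows "FSM_TarskiII_infinite (\<lambda>p W. p ` W) {W :: 'a set. finite W}"
proof -
  define C where "C n = {W :: 'a set. finite W \<and> card W \<le> n}" for n
  have "C n \<subset> C (Suc n)" for n
  proof -
    obtain B :: "'a set" where "finite B" "card B = Suc n"
      using infinite_arbitrarily_large[OF assms] by blast
    then have "B \<in> C (Suc n)" and "B \<notin> C n" by (simp_all add: C_def)
    moreover have "C n \<subseteq> C (Suc n)" by (auto simp: C_def)
    ultimately show ?thesis by blast
  qed
  then have "strict_mono C" by (simp add: strict_mono_Suc_iff)
  show ?thesis
  proof (rule TarskiII_infinite_if_strict_chain[where C = C and S = "{}"])
    show "C n \<subseteq> {W. finite W}" for n by (auto simp: C_def)
    show "(\<lambda>V. p ` V) ` C n = C n" if "p \<in> Fix {}" for p n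
      unfolding C_def using that by (intro bij_image_card_le_sets) (simp add: Fix_def perms_def)
  qed (simp_all add: \<open>strict_mono C\<close>)
qed

lemma supported_finite_set_subset:
  fixes S W :: "'a set"
  assumes "infinite (UNIV :: 'a set)" and "finite S" and "finite W"
    and fixed: "\<And>p. p \<in> Fix S \<Longrightarrow> p ` W = W"
  shows "W \<subseteq> S"
proof
  fix a assume "a \<in> W"
  obtain b where b: "b \<notin> S \<union> W"
    using ex_new_if_finite[OF assms(1) finite_UnI[OF assms(2,3)]] by blast
  show "a \<in> S"
  proof (rule ccontr)
    assume "a \<notin> S"
    have "transpose a b c = c" if "c \<in> S" for c
      using that b \<open>a \<notin> S\<close> by (metis UnI1 transpose_apply_other)
    then have "transpose a b \<in> Fix S"
      using permutation_swap_id by (simp add: Fix_def perms_iff_permutation)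
    then have "b \<in> W"
      using fixed \<open>a \<in> W\<close> by (metis image_eqI transpose_apply_first)
    with b show False by blast
  qed
qed

lemma not_Mostowski_infinite_finite_sets:
  assumes "infinite (UNIV :: 'a set)"
  shows "\<not> FSM_Mostowski_infinite (\<lambda>p W. p ` W) {W :: 'a set. finite W}"
proof
  assume "FSM_Mostowski_infinite (\<lambda>p W. p ` W) {W :: 'a set. finite W}"
  then obtain Y :: "'a set set" and R where Y: "Y \<subseteq> {W. finite W}" "infinite Y"
    and "linear_order_on Y R" and "fs_rel (\<lambda>p W. p ` W) R"
    unfolding FSM_Mostowski_infinite_def by blast
  obtain S :: "'a set" where "finite S"
    and fixed: "\<And>p W. p \<in> Fix S \<Longrightarrow> W \<in> Y \<Longrightarrow> p ` W = W"
    using fs_linear_order_common_support[OF invariant_set_finite_sets Y(1)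
        \<open>linear_order_on Y R\<close> \<open>fs_rel (\<lambda>p W. p ` W) R\<close>] by blast
  have "W \<subseteq> S" if W: "W \<in> Y" for W
  proof (rule supported_finite_set_subset[OF assms \<open>finite S\<close>])
    show "finite W" using Y(1) W by blast
    show "p ` W = W" if "p \<in> Fix S" for p using fixed[OF that W] .
  qed
  then have "Y \<subseteq> Pow S" by blast
  with \<open>finite S\<close> Y(2) show False by (meson finite_Pow_iff finite_subset)
qed

theorem mainTheorem15:
  fixes act :: "('a \<Rightarrow> 'a) \<Rightarrow> 'z \<Rightarrow> 'z" and Z X :: "'z set"
  assumes "infinite (UNIV :: 'a set)"
    and "invariant_set act Z" and "X \<subseteq> Z" and "fs_set act X"
  shows "(FSM_Dedekind_infinite act X \<longrightarrow> FSM_Mostowski_infinite act X) \<and>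
         (FSM_Mostowski_infinite act X \<longrightarrow> FSM_TarskiII_infinite act X) \<and>
         FSM_TarskiII_infinite (\<lambda>p W. p ` W) {W :: 'a set. finite W} \<and>
         \<not> FSM_Mostowski_infinite (\<lambda>p W. p ` W) {W :: 'a set. finite W}"
  using Dedekind_imp_Mostowski_infinite[OF assms(2,3)]
    Mostowski_imp_TarskiII_infinite[OF assms(2,3)]
    TarskiII_infinite_finite_sets[OF assms(1)]
    not_Mostowski_infinite_finite_sets[OF assms(1)]
  by blast

end
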